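(* Let $\mathcal{L}$ be a closed chain of $n \ge 7$ revolute joints with screw axes $\bm{\xi}_1,\dots,\bm{\xi}_n$ (in the cyclic order of the chain). Suppose there is a line $\ell$ such that every axis $\bm{\xi}_i$ intersects $\ell$, at points $p_1,\dots,p_n$ respectively, and these points occur along $\ell$ in monotone order, i.e. $p_1, p_2, \dots, p_n$ appear consecutively in this order along $\ell$ (in one of its two directions). Then $\mathcal{L}$ is hypo-paradoxical.
   Context: For a revolute joint with unit axis direction $\bm{\omega}_i$ through point $\bm{q}_i$, the screw is $\bm{\xi}_i = (\bm{\omega}_i, \bm{q}_i\times\bm{\omega}_i)$ with twist matrix $\hat{\bm{\xi}}_i = \begin{bmatrix} [\bm{\omega}_i]_\times & \bm{q}_i \times \bm{\omega}_i \\ 0 & 0\end{bmatrix}$. The configuration space of the closed chain is $\mathcal{C}(\mathcal{L}) = \{(\theta_1,\dots,\theta_n) : \prod_{i=1}^n e^{\hat{\bm{\xi}}_i\theta_i} = I_4\}$ near $\theta=0$ (it depends only on the screw axes). The Chebyshev–Grübler–Kutzbach mobility of a closed chain with $n$ links and $n$ revolute joints is $M = n-6$. A closed chain is hypo-paradoxical if $M > 0$ but $\dim\mathcal{C}(\mathcal{L}) = 0$, i.e. it admits no nontrivial continuous motion. *)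

theory Defs
  imports "HOL-Analysis.Analysis" "HOL-Analysis.Cross3"
begin

definition idx3 :: "4 \<Rightarrow> 3" where
  "idx3 i = (if i = 1 then 1 else if i = 2 then 2 else 3)"

text \<open>Twist matrix of the screw (w, q cross w) of a revolute joint with axis direction w
  through the point q:  [[ [w]_x , q cross w ], [0, 0]].  Row/column 4 is the homogeneous one.
  Column j (j = 1,2,3) of [w]_x is  w cross e_j.\<close>
definition twist :: "real^3 \<Rightarrow> real^3 \<Rightarrow> real^4^4" where
  "twist w q = (\<chi> i j. if i = 4 then 0
                        else if j = 4 then (cross3 q w) $ idx3 i
                        else (cross3 w (axis (idx3 j) 1)) $ idx3 i)"

primrec mpow :: "real^'n^'n \<Rightarrow> nat \<Rightarrow> real^'n^'n" where
  "mpow A 0 = mat 1"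
| "mpow A (Suc k) = mpow A k ** A"

definition mexp :: "real^'n^'n \<Rightarrow> real^'n^'n" where
  "mexp A = (\<Sum>k. (1 / fact k) *\<^sub>R mpow A k)"

primrec chain_prod :: "(nat \<Rightarrow> real^'n^'n) \<Rightarrow> nat \<Rightarrow> real^'n^'n" where
  "chain_prod F 0 = mat 1"
| "chain_prod F (Suc k) = chain_prod F k ** F (Suc k)"

text \<open>Loop closure:  prod_{i=1}^n exp(xi_i theta_i) = I_4.  A closed chain with n joints
  is given by axis directions w i and points q i, i = 1..n.\<close>
definition loop_closes :: "nat \<Rightarrow> (nat \<Rightarrow> real^3) \<Rightarrow> (nat \<Rightarrow> real^3) \<Rightarrow> (nat \<Rightarrow> real) \<Rightarrow> bool" where
  "loop_closes n w q \<theta> \<longleftrightarrow>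
     chain_prod (\<lambda>i. mexp (\<theta> i *\<^sub>R twist (w i) (q i))) n = mat 1"

text \<open>Configuration space C(L) (joint angles outside 1..n are irrelevant and fixed to 0).\<close>
definition config_space :: "nat \<Rightarrow> (nat \<Rightarrow> real^3) \<Rightarrow> (nat \<Rightarrow> real^3) \<Rightarrow> (nat \<Rightarrow> real) set" where
  "config_space n w q = {\<theta>. (\<forall>i. i \<notin> {1..n} \<longrightarrow> \<theta> i = 0) \<and> loop_closes n w q \<theta>}"

text \<open>dim C(L) = 0 near theta = 0: theta = 0 is an isolated point of C(L).\<close>
definition config_dim_zero_at_0 :: "nat \<Rightarrow> (nat \<Rightarrow> real^3) \<Rightarrow> (nat \<Rightarrow> real^3) \<Rightarrow> bool" where
  "config_dim_zero_at_0 n w q \<longleftrightarrow>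
     (\<exists>\<epsilon>>0. \<forall>\<theta>\<in>config_space n w q. (\<forall>i\<in>{1..n}. \<bar>\<theta> i\<bar> < \<epsilon>) \<longrightarrow> (\<forall>i. \<theta> i = 0))"

definition cgk_mobility :: "nat \<Rightarrow> int" where
  "cgk_mobility n = int n - 6"

definition hypo_paradoxical :: "nat \<Rightarrow> (nat \<Rightarrow> real^3) \<Rightarrow> (nat \<Rightarrow> real^3) \<Rightarrow> bool" where
  "hypo_paradoxical n w q \<longleftrightarrow> cgk_mobility n > 0 \<and> config_dim_zero_at_0 n w q"

definition line_through :: "real^3 \<Rightarrow> real^3 \<Rightarrow> (real^3) set" where
  "line_through p d = {p + s *\<^sub>R d | s. True}"

end

(* Each joint moves points by a rotation about its axis: an isometry that fixes the point p_i
   where the axis meets the line l. Follow p_n once around the loop. Joint n fixes it, and since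
   p_i lies on l between p_(i-1) and p_n, after joint i (i = n-1, ..., 2) the image is no farther
   from p_(i-1) than p_n is. Closure says that the rotation about axis 1, which fixes p_1, maps the
   final image back to p_n, so all these inequalities are equalities; by strict convexity of the
   Euclidean norm every joint i < n then fixes p_n, which lies off its axis, so sin theta_i = 0.
   For |theta_i| < pi this means theta_i = 0, and then theta_n = 0 because joint n must fix p_1. *)

theory Submission
  imports Defs
begin

unbundle cross3_syntax

definition homog :: "real \<Rightarrow> real^3 \<Rightarrow> real^4" where
  "homog c x = (\<chi> i. if i = 4 then c else x $ idx3 i)"

lemma homog_eq_iff [simp]: "homog c x = homog c' x' \<longleftrightarrow> c = c' \<and> x = x'"
  by (auto simp: homog_def vec_eq_iff forall_4 forall_3 idx3_def)

lemma homog_add: "homog c x + homog c' x' = homog (c + c') (x + x')"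
  by (simp add: homog_def vec_eq_iff)

lemma homog_scaleR: "r *\<^sub>R homog c x = homog (r * c) (r *\<^sub>R x)"
  by (simp add: homog_def vec_eq_iff)

lemma homog_surj: "\<exists>c x. v = homog c x"
proof (intro exI)
  show "v = homog (v $ 4) (vector [v $ 1, v $ 2, v $ 3])"
    by (simp add: homog_def vec_eq_iff forall_4 idx3_def)
qed

lemma twist_mult_homog: "twist w q *v homog c x = homog 0 (w \<times> (x - c *\<^sub>R q))"
  by (simp add: forall_4 sum_4 twist_def homog_def matrix_vector_mult_def cross3_simps axis_def
      idx3_def)

lemma cross_cross_unit:
  assumes "norm w = 1"
  shows "w \<times> (w \<times> v) = (w \<bullet> v) *\<^sub>R w - v"
  using assms by (simp add: Lagrange dot_square_norm)

lemma twist_cube: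
  assumes "norm w = 1"
  shows "twist w q ** twist w q ** twist w q = - twist w q"
proof (rule matrix_eq[THEN iffD2], intro allI)
  let ?X = "twist w q"
  fix v :: "real^4"
  obtain c x where v: "v = homog c x"
    using homog_surj by blast
  define y where "y = w \<times> (x - c *\<^sub>R q)"
  have "w \<bullet> y = 0"
    by (simp add: y_def dot_cross_self)
  then have perp: "w \<times> (w \<times> y) = - y"
    by (simp add: cross_cross_unit[OF assms])
  have "(?X ** ?X ** ?X) *v v = ?X *v (?X *v (?X *v v))"
    by (simp add: matrix_vector_mul_assoc matrix_mul_assoc)
  also have "\<dots> = homog 0 (w \<times> (w \<times> y))"
    by (simp add: v twist_mult_homog y_def)
  also have "\<dots> = - homog 0 y"
    using homog_scaleR[of "-1" 0 y] perp by simp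
  also have "\<dots> = (- ?X) *v v"
    using scaleR_matrix_vector_assoc[of "-1" ?X v] by (simp add: v twist_mult_homog y_def)
  finally show "(?X ** ?X ** ?X) *v v = (- ?X) *v v" .
qed

lemma matrix_diff_rdistrib: "(A - B) ** C = A ** C - B ** (C :: 'a::ring_1^'n^'m)"
  by (simp add: matrix_matrix_mult_def vec_eq_iff sum_subtractf left_diff_distrib)

lemma mpow_scaleR: "mpow (c *\<^sub>R A) k = (c ^ k) *\<^sub>R mpow A k"
  by (induction k) (simp_all add: matrix_scalar_ac scalar_matrix_assoc[symmetric])

lemma fact_sin_coeff_Suc: "fact (Suc k) * sin_coeff (Suc k) = fact k * cos_coeff k"
  by (simp add: sin_coeff_Suc del: of_nat_Suc)

lemma fact_cos_coeff_Suc: "fact (Suc k) * cos_coeff (Suc k) = - (fact k * sin_coeff k)"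
  by (simp add: cos_coeff_Suc del: of_nat_Suc)

lemma mpow_Suc_of_cube:
  assumes cube: "X ** X ** X = - X"
  shows "mpow X (Suc k) =
    (fact (Suc k) * sin_coeff (Suc k)) *\<^sub>R X - (fact (Suc k) * cos_coeff (Suc k)) *\<^sub>R (X ** X)"
proof (induction k)
  case 0
  then show ?case by (simp add: sin_coeff_def cos_coeff_def)
next
  case (Suc k)
  have "mpow X (Suc (Suc k)) = mpow X (Suc k) ** X"
    by (simp only: mpow.simps(2))
  also have "\<dots> = (fact (Suc k) * sin_coeff (Suc k)) *\<^sub>R (X ** X)
      - (fact (Suc k) * cos_coeff (Suc k)) *\<^sub>R (X ** X ** X)"
    by (simp only: Suc.IH matrix_diff_rdistrib scalar_matrix_assoc)
  finally show ?case
    by (simp only: cube fact_sin_coeff_Suc fact_cos_coeff_Suc) simp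
qed

(* Rodrigues' formula: X^3 = -X splits the exponential series into the sine and cosine series. *)
lemma mexp_of_cube:
  assumes cube: "X ** X ** X = - X"
  shows "mexp (\<theta> *\<^sub>R X) = mat 1 + sin \<theta> *\<^sub>R X + (1 - cos \<theta>) *\<^sub>R (X ** X)"
proof -
  define T where "T k = (1 / fact k) *\<^sub>R mpow (\<theta> *\<^sub>R X) k" for k
  define g where "g k = (sin_coeff k * \<theta> ^ k) *\<^sub>R X - (cos_coeff k * \<theta> ^ k) *\<^sub>R (X ** X)" for k
  have "g sums (sin \<theta> *\<^sub>R X - cos \<theta> *\<^sub>R (X ** X))"
    unfolding g_def using sin_converges[of \<theta>] cos_converges[of \<theta>]
    by (intro sums_diff sums_scaleR_left) simp_all
  then have "(\<lambda>k. g (Suc k)) sums (sin \<theta> *\<^sub>R X + (1 - cos \<theta>) *\<^sub>R (X ** X))"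
    by (subst sums_Suc_iff) (simp add: g_def algebra_simps)
  moreover have "T (Suc k) = g (Suc k)" for k
    by (simp add: T_def g_def mpow_scaleR mpow_Suc_of_cube[OF cube] scaleR_diff_right mult_ac
        del: mpow.simps fact_Suc)
  ultimately have "T sums (sin \<theta> *\<^sub>R X + (1 - cos \<theta>) *\<^sub>R (X ** X) + T 0)"
    using sums_Suc_iff[of T] by simp
  moreover have "mexp (\<theta> *\<^sub>R X) = suminf T"
    unfolding mexp_def T_def ..
  ultimately show ?thesis
    by (simp add: sums_iff T_def algebra_simps)
qed

definition rodrigues :: "real^3 \<Rightarrow> real \<Rightarrow> real^3 \<Rightarrow> real^3" where
  "rodrigues w \<theta> v = v + sin \<theta> *\<^sub>R (w \<times> v) + (1 - cos \<theta>) *\<^sub>R (w \<times> (w \<times> v))"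

definition rotate_about :: "real^3 \<Rightarrow> real^3 \<Rightarrow> real \<Rightarrow> real^3 \<Rightarrow> real^3" where
  "rotate_about w q \<theta> x = q + rodrigues w \<theta> (x - q)"

lemma mexp_twist_mult_homog:
  assumes "norm w = 1"
  shows "mexp (\<theta> *\<^sub>R twist w q) *v homog 1 x = homog 1 (rotate_about w q \<theta> x)"
  by (simp add: mexp_of_cube[OF twist_cube[OF assms]] matrix_vector_mult_add_rdistrib
      scaleR_matrix_vector_assoc[symmetric] matrix_vector_mul_assoc[symmetric]
      twist_mult_homog homog_scaleR homog_add rotate_about_def rodrigues_def)

lemma norm_rodrigues:
  assumes "norm w = 1"
  shows "norm (rodrigues w \<theta> v) = norm v"
proof -
  define u where "u = w \<times> v"
  have uv: "u \<bullet> v = 0" and uw: "u \<bullet> w = 0"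
    by (simp_all add: u_def dot_cross_self)
  have uu: "u \<bullet> u = v \<bullet> v - (w \<bullet> v)\<^sup>2"
    using norm_cross_dot[of w v] assms by (simp add: u_def dot_square_norm)
  have ww: "w \<bullet> w = 1"
    using assms by (simp add: dot_square_norm)
  define c s where "c = cos \<theta>" and "s = sin \<theta>"
  have rod: "rodrigues w \<theta> v = c *\<^sub>R v + ((1 - c) * (w \<bullet> v)) *\<^sub>R w + s *\<^sub>R u"
    by (simp add: rodrigues_def c_def s_def u_def Lagrange ww algebra_simps)
  have "(c *\<^sub>R v + ((1 - c) * (w \<bullet> v)) *\<^sub>R w + s *\<^sub>R u)
      \<bullet> (c *\<^sub>R v + ((1 - c) * (w \<bullet> v)) *\<^sub>R w + s *\<^sub>R u)
      = (s\<^sup>2 + c\<^sup>2) * (v \<bullet> v) + (1 - (s\<^sup>2 + c\<^sup>2)) * (w \<bullet> v)\<^sup>2"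
    by (simp add: uv uw uu ww inner_commute power2_eq_square algebra_simps)
  also have "\<dots> = v \<bullet> v"
    using sin_cos_squared_add[of \<theta>] by (simp only: c_def s_def) simp
  finally show ?thesis
    by (simp add: rod norm_eq_sqrt_inner)
qed

lemma dist_rotate_about:
  assumes "norm w = 1"
  shows "dist (rotate_about w q \<theta> x) (rotate_about w q \<theta> y) = dist x y"
proof -
  have "rotate_about w q \<theta> x - rotate_about w q \<theta> y = rodrigues w \<theta> (x - y)"
    by (simp add: rotate_about_def rodrigues_def cross3_simps)
  then show ?thesis
    by (simp add: dist_norm norm_rodrigues[OF assms])
qed

lemma cross_eq_0_iff_in_line_through:
  assumes "w \<noteq> 0"
  shows "w \<times> (x - q) = 0 \<longleftrightarrow> x \<in> line_through q w"
proof -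
  have "w \<times> (x - q) = 0 \<longleftrightarrow> (\<exists>s. x - q = s *\<^sub>R w)"
    using assms by (auto simp: cross_eq_0 collinear_lemma)
  also have "\<dots> \<longleftrightarrow> x \<in> line_through q w"
    by (auto simp: line_through_def algebra_simps)
  finally show ?thesis .
qed

lemma rotate_about_fixes_line_through:
  assumes "x \<in> line_through q w"
  shows "rotate_about w q \<theta> x = x"
  using assms by (auto simp: line_through_def rotate_about_def rodrigues_def cross_mult_right)

lemma rotate_about_fixes_off_axis_angle_eq_0:
  assumes "w \<noteq> 0" "x \<notin> line_through q w" "\<bar>\<theta>\<bar> < pi" "rotate_about w q \<theta> x = x"
  shows "\<theta> = 0"
proof -
  define u where "u = w \<times> (x - q)"
  have "u \<noteq> 0"
    using assms(1,2) by (simp add: u_def cross_eq_0_iff_in_line_through)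
  have "sin \<theta> *\<^sub>R u + (1 - cos \<theta>) *\<^sub>R (w \<times> u) = 0"
    using assms(4) by (simp add: u_def rotate_about_def rodrigues_def algebra_simps)
  then have "u \<bullet> (sin \<theta> *\<^sub>R u + (1 - cos \<theta>) *\<^sub>R (w \<times> u)) = 0"
    by simp
  then have "sin \<theta> * (u \<bullet> u) = 0"
    by (simp add: inner_add_right dot_cross_self)
  with \<open>u \<noteq> 0\<close> have "sin \<theta> = 0"
    by simp
  with assms(3) show ?thesis
    using sin_eq_0_pi by (simp add: abs_less_iff)
qed

lemma chain_prod_mult_homog:
  assumes "\<And>i x. i \<in> {1..k} \<Longrightarrow> F i *v homog 1 x = homog 1 (g i x)"
  shows "chain_prod F k *v homog 1 x = homog 1 (foldr g [1..<Suc k] x)"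
  using assms
proof (induction k arbitrary: x)
  case 0
  then show ?case by simp
next
  case (Suc k)
  have "chain_prod F (Suc k) *v homog 1 x = chain_prod F k *v (F (Suc k) *v homog 1 x)"
    by (simp add: matrix_vector_mul_assoc)
  also have "\<dots> = homog 1 (foldr g [1..<Suc k] (g (Suc k) x))"
    using Suc by simp
  finally show ?case
    by simp
qed

lemma loop_closes_foldr_rotate_about:
  assumes "loop_closes n w q \<theta>" and "\<forall>i\<in>{1..n}. norm (w i) = 1"
  shows "foldr (\<lambda>i. rotate_about (w i) (q i) (\<theta> i)) [1..<Suc n] x = x"
proof -
  have "homog 1 x = chain_prod (\<lambda>i. mexp (\<theta> i *\<^sub>R twist (w i) (q i))) n *v homog 1 x"
    using assms(1) by (simp add: loop_closes_def)
  also have "\<dots> = homog 1 (foldr (\<lambda>i. rotate_about (w i) (q i) (\<theta> i)) [1..<Suc n] x)"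
    using assms(2) by (intro chain_prod_mult_homog) (simp add: mexp_twist_mult_homog)
  finally show ?thesis
    by simp
qed

lemma dist_through_between_point:
  fixes b m c y :: "'a::real_inner"
  assumes between: "dist c b = dist c m + dist m b" and "m \<noteq> b"
    and closer: "dist y m \<le> dist c m"
  shows "dist y b \<le> dist c b" and "dist y b = dist c b \<Longrightarrow> y = c"
proof -
  show "dist y b \<le> dist c b"
    using dist_triangle[of y b m] between closer by linarith
next
  assume eq: "dist y b = dist c b"
  have ym: "norm (y - m) = norm (c - m)"
    and tri_y: "norm ((y - m) + (m - b)) = norm (y - m) + norm (m - b)"
    using dist_triangle[of y b m] between closer eq by (simp_all add: dist_norm)
  have tri_c: "norm ((c - m) + (m - b)) = norm (c - m) + norm (m - b)"
    using between by (simp add: dist_norm)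
  have "norm (m - b) *\<^sub>R (y - m) = norm (y - m) *\<^sub>R (m - b)"
    using tri_y norm_triangle_eq by metis
  also have "\<dots> = norm (m - b) *\<^sub>R (c - m)"
    using tri_c norm_triangle_eq ym by metis
  finally have "norm (m - b) *\<^sub>R (y - m) = norm (m - b) *\<^sub>R (c - m)" .
  then show "y = c"
    using \<open>m \<noteq> b\<close> by simp
qed

lemma foldr_fixed_point:
  assumes "\<And>j. j \<in> set js \<Longrightarrow> f j x = x"
  shows "foldr f js x = x"
  using assms by (induction js) auto

lemma foldr_isometries_dist_le:
  fixes f :: "nat \<Rightarrow> 'a::real_inner \<Rightarrow> 'a" and p :: "nat \<Rightarrow> 'a"
  assumes "k < n"
    and isometry: "\<And>i x y. k < i \<Longrightarrow> i < n \<Longrightarrow> dist (f i x) (f i y) = dist x y"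
    and fixed: "\<And>i. k < i \<Longrightarrow> i < n \<Longrightarrow> f i (p i) = p i"
    and between: "\<And>i j. k \<le> i \<Longrightarrow> i < j \<Longrightarrow> j < n \<Longrightarrow>
      dist (p n) (p i) = dist (p n) (p j) + dist (p j) (p i)"
    and distinct: "\<And>i j. k \<le> i \<Longrightarrow> i < j \<Longrightarrow> j < n \<Longrightarrow> p j \<noteq> p i"
  shows "dist (foldr f [Suc k..<n] (p n)) (p k) \<le> dist (p n) (p k) \<and>
    (dist (foldr f [Suc k..<n] (p n)) (p k) = dist (p n) (p k) \<longrightarrow>
      (\<forall>j\<in>{k<..<n}. f j (p n) = p n))"
proof -
  from \<open>k < n\<close> have "k \<le> n - 1" by simp
  then show ?thesis
    using isometry fixed between distinct
  proof (induction k rule: inc_induct)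
    case base
    then show ?case by auto
  next
    case (step k)
    define z where "z = foldr f [Suc (Suc k)..<n] (p n)"
    have unfold: "foldr f [Suc k..<n] (p n) = f (Suc k) z"
      using step.hyps by (simp add: z_def upt_conv_Cons)
    have IH: "dist z (p (Suc k)) \<le> dist (p n) (p (Suc k)) \<and>
        (dist z (p (Suc k)) = dist (p n) (p (Suc k)) \<longrightarrow> (\<forall>j\<in>{Suc k<..<n}. f j (p n) = p n))"
      unfolding z_def using step.prems by (intro step.IH) auto
    have dist_f: "dist (f (Suc k) z) (p (Suc k)) = dist z (p (Suc k))"
      using step.prems(1)[of "Suc k" z "p (Suc k)"] step.prems(2)[of "Suc k"] step.hyps by simp
    have between_k: "dist (p n) (p k) = dist (p n) (p (Suc k)) + dist (p (Suc k)) (p k)"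
      and "p (Suc k) \<noteq> p k"
      using step.prems(3,4)[of k "Suc k"] step.hyps by auto
    note through = dist_through_between_point[OF between_k \<open>p (Suc k) \<noteq> p k\<close>, of "f (Suc k) z"]
    have "dist (f (Suc k) z) (p k) \<le> dist (p n) (p k)"
      using through(1) dist_f IH by simp
    moreover have "\<forall>j\<in>{k<..<n}. f j (p n) = p n"
      if eq: "dist (f (Suc k) z) (p k) = dist (p n) (p k)"
    proof -
      have fz: "f (Suc k) z = p n"
        using through(2) dist_f IH eq by simp
      then have "\<forall>j\<in>{Suc k<..<n}. f j (p n) = p n"
        using IH dist_f by simp
      moreover from this have "z = p n"
        unfolding z_def by (intro foldr_fixed_point) auto
      ultimately show ?thesis
        using fz by (metis Suc_lessI greaterThanLessThan_iff)
    qed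
    ultimately show ?case
      unfolding unfold by blast
  qed
qed

lemma closed_isometry_chain_fixes_last_point:
  fixes f :: "nat \<Rightarrow> 'a::real_inner \<Rightarrow> 'a" and p :: "nat \<Rightarrow> 'a"
  assumes "2 \<le> n"
    and isometry: "\<And>i x y. i \<in> {1..n} \<Longrightarrow> dist (f i x) (f i y) = dist x y"
    and fixed: "\<And>i. i \<in> {1..n} \<Longrightarrow> f i (p i) = p i"
    and between: "\<And>i j. 1 \<le> i \<Longrightarrow> i < j \<Longrightarrow> j < n \<Longrightarrow>
      dist (p n) (p i) = dist (p n) (p j) + dist (p j) (p i)"
    and distinct: "\<And>i j. 1 \<le> i \<Longrightarrow> i < j \<Longrightarrow> j < n \<Longrightarrow> p j \<noteq> p i"
    and closed: "foldr f [1..<Suc n] (p n) = p n"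
  shows "\<forall>j\<in>{1..<n}. f j (p n) = p n"
proof -
  define z where "z = foldr f [Suc 1..<n] (p n)"
  have "[1..<Suc n] = 1 # [Suc 1..<n] @ [n]"
    using \<open>2 \<le> n\<close> upt_conv_Cons[of 1 n] by simp
  then have fz: "f 1 z = p n"
    using closed fixed[of n] \<open>2 \<le> n\<close> by (simp add: z_def)
  have "dist z (p 1) = dist (p n) (p 1)"
    using isometry[of 1 z "p 1"] fixed[of 1] fz \<open>2 \<le> n\<close> by simp
  moreover have "dist z (p 1) \<le> dist (p n) (p 1) \<and>
      (dist z (p 1) = dist (p n) (p 1) \<longrightarrow> (\<forall>j\<in>{1<..<n}. f j (p n) = p n))"
    unfolding z_def using \<open>2 \<le> n\<close> isometry fixed between distinct
    by (intro foldr_isometries_dist_le) auto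
  ultimately have middle: "\<forall>j\<in>{1<..<n}. f j (p n) = p n"
    by blast
  then have "z = p n"
    unfolding z_def by (intro foldr_fixed_point) auto
  with fz middle show ?thesis
    by (metis atLeastLessThan_iff greaterThanLessThan_iff le_neq_implies_less)
qed

lemma dist_between_on_line:
  fixes a d :: "'a::real_normed_vector"
  assumes "r \<le> s" "s \<le> u"
  shows "dist (a + u *\<^sub>R d) (a + r *\<^sub>R d)
    = dist (a + u *\<^sub>R d) (a + s *\<^sub>R d) + dist (a + s *\<^sub>R d) (a + r *\<^sub>R d)"
proof -
  have "dist (a + x *\<^sub>R d) (a + y *\<^sub>R d) = \<bar>x - y\<bar> * norm d" for x y
    by (simp add: dist_norm flip: scaleR_diff_left)
  then show ?thesis
    using assms by (simp add: algebra_simps)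
qed

lemma line_through_uminus: "line_through a (- d) = line_through a d"
  unfolding line_through_def by (metis scaleR_minus_left scaleR_minus_right minus_minus)

lemma not_in_line_through_if_meets_elsewhere:
  assumes "line_through q w \<inter> line_through a d = {a + s *\<^sub>R d}" and "d \<noteq> 0" and "r \<noteq> s"
  shows "a + r *\<^sub>R d \<notin> line_through q w"
proof
  assume "a + r *\<^sub>R d \<in> line_through q w"
  moreover have "a + r *\<^sub>R d \<in> line_through a d"
    by (auto simp: line_through_def)
  ultimately have "a + r *\<^sub>R d = a + s *\<^sub>R d"
    using assms(1) by blast
  with assms(2,3) show False
    by simp
qed

lemma closed_chain_fixes_last_meeting_point:
  fixes n :: nat and w q :: "nat \<Rightarrow> real^3" and a d :: "real^3" and t \<theta> :: "nat \<Rightarrow> real"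
  assumes "2 \<le> n"
    and unit_axes: "\<forall>i\<in>{1..n}. norm (w i) = 1"
    and "d \<noteq> 0"
    and meets: "\<forall>i\<in>{1..n}. line_through (q i) (w i) \<inter> line_through a d = {a + t i *\<^sub>R d}"
    and increasing: "strict_mono_on {1..n} t"
    and closes: "loop_closes n w q \<theta>"
  shows "\<forall>j\<in>{1..<n}. rotate_about (w j) (q j) (\<theta> j) (a + t n *\<^sub>R d) = a + t n *\<^sub>R d"
proof (rule closed_isometry_chain_fixes_last_point[OF \<open>2 \<le> n\<close>])
  show "dist (rotate_about (w i) (q i) (\<theta> i) x) (rotate_about (w i) (q i) (\<theta> i) y) = dist x y"
    if "i \<in> {1..n}" for i x y
    using unit_axes that by (simp add: dist_rotate_about)
  show "rotate_about (w i) (q i) (\<theta> i) (a + t i *\<^sub>R d) = a + t i *\<^sub>R d" if "i \<in> {1..n}" for i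
  proof -
    have "a + t i *\<^sub>R d \<in> line_through (q i) (w i)"
      using meets that by auto
    then show ?thesis
      by (rule rotate_about_fixes_line_through)
  qed
  show "dist (a + t n *\<^sub>R d) (a + t i *\<^sub>R d)
      = dist (a + t n *\<^sub>R d) (a + t j *\<^sub>R d) + dist (a + t j *\<^sub>R d) (a + t i *\<^sub>R d)"
    if "1 \<le> i" "i < j" "j < n" for i j
    using that by (intro dist_between_on_line less_imp_le strict_mono_onD[OF increasing]) auto
  show "a + t j *\<^sub>R d \<noteq> a + t i *\<^sub>R d" if "1 \<le> i" "i < j" "j < n" for i j
    using strict_mono_onD[OF increasing, of i j] that \<open>d \<noteq> 0\<close> by simp
  show "foldr (\<lambda>i. rotate_about (w i) (q i) (\<theta> i)) [1..<Suc n] (a + t n *\<^sub>R d) = a + t n *\<^sub>R d"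
    using closes unit_axes by (rule loop_closes_foldr_rotate_about)
qed

lemma config_space_trivial_near_0_if_increasing:
  fixes n :: nat and w q :: "nat \<Rightarrow> real^3" and a d :: "real^3" and t \<theta> :: "nat \<Rightarrow> real"
  assumes "2 \<le> n"
    and unit_axes: "\<forall>i\<in>{1..n}. norm (w i) = 1"
    and "d \<noteq> 0"
    and meets: "\<forall>i\<in>{1..n}. line_through (q i) (w i) \<inter> line_through a d = {a + t i *\<^sub>R d}"
    and increasing: "strict_mono_on {1..n} t"
    and config: "\<theta> \<in> config_space n w q"
    and small: "\<forall>i\<in>{1..n}. \<bar>\<theta> i\<bar> < pi"
  shows "\<forall>i. \<theta> i = 0"
proof -
  define f where "f = (\<lambda>i. rotate_about (w i) (q i) (\<theta> i))"
  define p where "p i = a + t i *\<^sub>R d" for i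
  have closes: "loop_closes n w q \<theta>"
    using config by (simp add: config_space_def)
  have angle_0: "\<theta> i = 0" if "f i (p j) = p j" "i \<in> {1..n}" "j \<in> {1..n}" "i \<noteq> j" for i j
  proof (rule rotate_about_fixes_off_axis_angle_eq_0)
    have "t j \<noteq> t i"
      using strict_mono_on_imp_inj_on[OF increasing] that(2-4) by (auto dest: inj_onD)
    then show "p j \<notin> line_through (q i) (w i)"
      using meets that(2) \<open>d \<noteq> 0\<close> unfolding p_def
      by (intro not_in_line_through_if_meets_elsewhere) auto
    show "w i \<noteq> 0"
      using unit_axes that(2) by force
  qed (use small that in \<open>auto simp: f_def\<close>)
  have below_n: "\<theta> j = 0" if "j \<in> {1..<n}" for j
    using closed_chain_fixes_last_meeting_point[OF assms(1-5) closes] angle_0[of j n] that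
    by (auto simp: f_def p_def)
  have "foldr f [1..<n] (f n (p 1)) = f n (p 1)"
    using below_n by (intro foldr_fixed_point) (simp add: f_def rotate_about_def rodrigues_def)
  then have "\<theta> n = 0"
    using loop_closes_foldr_rotate_about[OF closes unit_axes, of "p 1"] angle_0[of n 1] \<open>2 \<le> n\<close>
    by (simp add: f_def)
  show ?thesis
  proof
    fix i
    show "\<theta> i = 0"
    proof (cases "i \<in> {1..n}")
      case True
      then show ?thesis
        using below_n \<open>\<theta> n = 0\<close> by (cases "i = n") auto
    next
      case False
      then show ?thesis
        using config by (simp add: config_space_def)
    qed
  qed
qed

lemma config_dim_zero_at_0_if_monotone:
  fixes n :: nat and w q :: "nat \<Rightarrow> real^3" and a d :: "real^3" and t :: "nat \<Rightarrow> real"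
  assumes "2 \<le> n"
    and "\<forall>i\<in>{1..n}. norm (w i) = 1"
    and "d \<noteq> 0"
    and meets: "\<forall>i\<in>{1..n}. line_through (q i) (w i) \<inter> line_through a d = {a + t i *\<^sub>R d}"
    and monotone: "strict_mono_on {1..n} t \<or> strict_mono_on {1..n} (\<lambda>i. - t i)"
  shows "config_dim_zero_at_0 n w q"
proof -
  have meets_neg: "\<forall>i\<in>{1..n}.
      line_through (q i) (w i) \<inter> line_through a (- d) = {a + (- t i) *\<^sub>R (- d)}"
    using meets by (simp add: line_through_uminus)
  note increasing_case = config_space_trivial_near_0_if_increasing[OF assms(1,2)]
  have "\<forall>i. \<theta> i = 0" if "\<theta> \<in> config_space n w q" "\<forall>i\<in>{1..n}. \<bar>\<theta> i\<bar> < pi" for \<theta>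
    using monotone
  proof
    assume "strict_mono_on {1..n} t"
    then show ?thesis
      using increasing_case[OF \<open>d \<noteq> 0\<close> meets _ that] by blast
  next
    assume "strict_mono_on {1..n} (\<lambda>i. - t i)"
    then show ?thesis
      using increasing_case[OF _ meets_neg _ that] \<open>d \<noteq> 0\<close> by simp
  qed
  then show ?thesis
    unfolding config_dim_zero_at_0_def using pi_gt_zero by blast
qed

theorem mainTheorem2:
  fixes n :: nat and w q :: "nat \<Rightarrow> real^3"
    and a d :: "real^3" and t :: "nat \<Rightarrow> real"
  assumes n7: "n \<ge> 7"
    and unit_axes: "\<forall>i\<in>{1..n}. norm (w i) = 1"
    and d_nz: "d \<noteq> 0"
    and meets: "\<forall>i\<in>{1..n}. line_through (q i) (w i) \<inter> line_through a d = {a + t i *\<^sub>R d}"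
    and monotone: "(\<forall>i\<in>{1..n}. \<forall>j\<in>{1..n}. i < j \<longrightarrow> t i < t j)
                 \<or> (\<forall>i\<in>{1..n}. \<forall>j\<in>{1..n}. i < j \<longrightarrow> t i > t j)"
  shows "hypo_paradoxical n w q"
proof -
  have "strict_mono_on {1..n} t \<or> strict_mono_on {1..n} (\<lambda>i. - t i)"
    using monotone by (auto intro: strict_mono_onI)
  then have "config_dim_zero_at_0 n w q"
    using n7 unit_axes d_nz meets by (intro config_dim_zero_at_0_if_monotone) auto
  moreover have "cgk_mobility n > 0"
    using n7 by (simp add: cgk_mobility_def)
  ultimately show ?thesis
    by (simp add: hypo_paradoxical_def)
qed

end
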